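(* Consider the data sharing game with participants $N=\{1,\dots,n\}$ and a server $0$ with budget $b_0\ge 0$, in which every participant inputs its true dataset, and let $w$ be the associated characteristic function $$w(S)=\sum_{i\in S} v_i(F(D_S),D_i)+b_0 \quad (\emptyset\neq S\subseteq N),\qquad w(\emptyset)=0 .$$ Suppose that the global model trained on all data performs better than the model trained on any coalition, in the sense that for every nonempty $S\subseteq N$ and every $i\in S$, $v_i(F(D),D_i)\ge v_i(F(D_S),D_i)$. Then the core $$\mathrm{Core}(N)=\Big\{(\pi_0,\pi_1,\dots,\pi_n)\in\mathbb{R}^{n+1}_{+}\ :\ \sum_{i\in N}\pi_i+\pi_0=w(N),\ \ \sum_{i\in S}\pi_i+\pi_0\ge w(S)\ \text{for all } S\subseteq N\Big\}$$ is nonempty.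
   Context: Each participant $i\in N$ holds a dataset $D_i$; $D=\cup_{i\in N}D_i$ and, for $S\subseteq N$, $D_S=\{D_i\}_{i\in S}$. $F$ is a federated learning algorithm mapping a collection of datasets to a (global) model, $A(\cdot)$ is an accuracy metric of a model, and $h_i(\cdot)=k_iA(\cdot)$ with constant $k_i>0$. The valuation of participant $i$ (with original dataset $D_i$) for a model $M$ is $v_i(M,D_i)=\mathbb{E}\big[\max\{h_i(M)-h_i(F(D_i)),0\}\big]$, where the expectation is over the randomness of training/evaluation; in particular $v_i\ge 0$. *)

theory Defs
  imports "HOL-Probability.Probability"
begin

definition coll :: "(nat \<Rightarrow> 'd) \<Rightarrow> nat set \<Rightarrow> (nat \<Rightarrow> 'd option)" where
  "coll D S = (\<lambda>i. if i \<in> S then Some (D i) else None)"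

(* Randomness of training/evaluation is an outcome w of probability space P.
   F C w : model trained on collection C with randomness w;  A M w : accuracy of model M.
   A (random) model is a map 'w => 'm.
   v_i(M, D_i) = E[ max{ h_i(M) - h_i(F(D_i)), 0 } ] with h_i = k_i * A. *)
definition valuation ::
  "'w measure \<Rightarrow> ((nat \<Rightarrow> 'd option) \<Rightarrow> 'w \<Rightarrow> 'm) \<Rightarrow> ('m \<Rightarrow> 'w \<Rightarrow> real)
   \<Rightarrow> real \<Rightarrow> (nat \<Rightarrow> 'd) \<Rightarrow> nat \<Rightarrow> ('w \<Rightarrow> 'm) \<Rightarrow> real" where
  "valuation P F A k D i M =
     (\<integral>\<omega>. max (k * A (M \<omega>) \<omega> - k * A (F (coll D {i}) \<omega>) \<omega>) 0 \<partial>P)"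

definition char_fun ::
  "'w measure \<Rightarrow> ((nat \<Rightarrow> 'd option) \<Rightarrow> 'w \<Rightarrow> 'm) \<Rightarrow> ('m \<Rightarrow> 'w \<Rightarrow> real)
   \<Rightarrow> (nat \<Rightarrow> real) \<Rightarrow> (nat \<Rightarrow> 'd) \<Rightarrow> real \<Rightarrow> nat set \<Rightarrow> real" where
  "char_fun P F A k D b0 S =
     (if S = {} then 0
      else (\<Sum>i\<in>S. valuation P F A (k i) D i (F (coll D S))) + b0)"

definition core :: "nat \<Rightarrow> (nat set \<Rightarrow> real) \<Rightarrow> (nat \<Rightarrow> real) set" where
  "core n w = {\<pi>. (\<forall>j\<in>{0..n}. \<pi> j \<ge> 0)
                 \<and> (\<Sum>i\<in>{1..n}. \<pi> i) + \<pi> 0 = w {1..n}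
                 \<and> (\<forall>S. S \<subseteq> {1..n} \<longrightarrow> (\<Sum>i\<in>S. \<pi> i) + \<pi> 0 \<ge> w S)}"

end

theory Submission
  imports Defs
begin

(* Pay every participant its valuation of the global model and give the whole budget to the
   server.  The grand coalition then receives exactly w(N), and by the hypothesis any other
   coalition S receives at least what the models trained on D_S would give it, i.e. w(S).
   Nonnegativity of the payments comes from the max with 0 inside the valuation alone. *)

lemma valuation_nonneg: "valuation P F A k D i M \<ge> 0"
  unfolding valuation_def by (rule integral_nonneg_AE) simp

lemma char_fun_le_global_model_payoff:
  assumes "S \<noteq> {}"
    and "\<forall>i\<in>S. valuation P F A (k i) D i (F (coll D S))
                   \<le> valuation P F A (k i) D i (F (coll D N))"
  shows "char_fun P F A k D b0 S \<le> (\<Sum>i\<in>S. valuation P F A (k i) D i (F (coll D N))) + b0"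
  using assms by (auto simp: char_fun_def intro: sum_mono)

(* For n = 0 the grand coalition is empty and w {} = 0 forces the server's share to be 0. *)
lemma additive_payoff_in_core:
  fixes w :: "nat set \<Rightarrow> real" and u :: "nat \<Rightarrow> real"
  assumes w_empty: "w {} = 0"
    and u_nonneg: "\<forall>i\<in>{1..n}. u i \<ge> 0"
    and b_nonneg: "b \<ge> 0"
    and w_grand: "n \<noteq> 0 \<Longrightarrow> w {1..n} = (\<Sum>i\<in>{1..n}. u i) + b"
    and w_le: "\<And>S. S \<subseteq> {1..n} \<Longrightarrow> S \<noteq> {} \<Longrightarrow> w S \<le> (\<Sum>i\<in>S. u i) + b"
  shows "(\<lambda>i. if i = 0 then (if n = 0 then 0 else b) else u i) \<in> core n w"
    (is "?\<pi> \<in> _")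
proof -
  have sum_\<pi>: "(\<Sum>i\<in>S. ?\<pi> i) = (\<Sum>i\<in>S. u i)" if "S \<subseteq> {1..n}" for S
    using that by (intro sum.cong) auto
  have coalition: "(\<Sum>i\<in>S. ?\<pi> i) + ?\<pi> 0 \<ge> w S" if S: "S \<subseteq> {1..n}" for S
  proof (cases "S = {}")
    case True
    then show ?thesis using w_empty b_nonneg by simp
  next
    case False
    then have "n \<noteq> 0" using S by auto
    then show ?thesis using w_le[OF S False] sum_\<pi>[OF S] by simp
  qed
  have "(\<Sum>i\<in>{1..n}. ?\<pi> i) + ?\<pi> 0 = w {1..n}"
    using w_grand w_empty sum_\<pi>[of "{1..n}"] by (cases "n = 0") auto
  moreover have "\<forall>j\<in>{0..n}. ?\<pi> j \<ge> 0"
    using u_nonneg b_nonneg by auto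
  ultimately show ?thesis
    using coalition unfolding core_def by blast
qed

theorem theorem2:
  fixes P :: "'w measure"
    and F :: "(nat \<Rightarrow> 'd option) \<Rightarrow> 'w \<Rightarrow> 'm"
    and A :: "'m \<Rightarrow> 'w \<Rightarrow> real"
    and k :: "nat \<Rightarrow> real"
    and D :: "nat \<Rightarrow> 'd"
    and b0 :: real
    and n :: nat
  assumes "prob_space P"
    and "\<forall>i\<in>{1..n}. k i > 0"
    and "b0 \<ge> 0"
    and "\<forall>S. S \<subseteq> {1..n} \<and> S \<noteq> {} \<longrightarrow>
           (\<forall>i\<in>S. valuation P F A (k i) D i (F (coll D {1..n}))
                  \<ge> valuation P F A (k i) D i (F (coll D S)))"
  shows "core n (char_fun P F A k D b0) \<noteq> {}"
proof -
  let ?u = "\<lambda>i. valuation P F A (k i) D i (F (coll D {1..n}))"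
  have "(\<lambda>i. if i = 0 then (if n = 0 then 0 else b0) else ?u i) \<in> core n (char_fun P F A k D b0)"
  proof (rule additive_payoff_in_core)
    fix S :: "nat set"
    assume "S \<subseteq> {1..n}" "S \<noteq> {}"
    then show "char_fun P F A k D b0 S \<le> (\<Sum>i\<in>S. ?u i) + b0"
      using assms(4) by (intro char_fun_le_global_model_payoff) auto
  qed (use assms(3) valuation_nonneg in \<open>auto simp: char_fun_def\<close>)
  then show ?thesis by blast
qed

end
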